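(* Let $A,B,B'$ be clusterings of $\{1,\dots,n\}$. Then $B'$ is an $A$-consistent improvement of $B$ if and only if $B'\neq B$ and $B'$ can be obtained from $B$ by a finite sequence of perfect splits and perfect merges (each taken with respect to $A$).
   Context: A clustering of $\{1,\dots,n\}$ is a partition into nonempty disjoint clusters. A pair of distinct elements is an intra-cluster pair of a clustering if both lie in the same cluster, and an inter-cluster pair otherwise. A pair agrees in clusterings $A$ and $B$ if it is intra-cluster in both or inter-cluster in both. $B'$ is an $A$-consistent improvement of $B$ if $B\neq B'$ and every pair of elements that agrees in $A$ and $B$ also agrees in $A$ and $B'$. $B'$ is a perfect split of $B$ (w.r.t. $A$) if $B'$ is obtained from $B$ by splitting one cluster $B_1$ into two nonempty clusters $B_1',B_2'$ such that for every cluster $A_i$ of $A$, $A_i\cap B_1$ is contained in $B_1'$ or in $B_2'$. $B'$ is a perfect merge of $B$ (w.r.t. $A$) if there is a cluster $A_i$ of $A$ and two distinct clusters $B_1,B_2\subseteq A_i$ of $B$ such that $B'$ is obtained from $B$ by merging $B_1$ and $B_2$ into one cluster. *)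

theory Defs
  imports Main
begin

definition is_clustering :: "nat \<Rightarrow> nat set set \<Rightarrow> bool" where
  "is_clustering n C \<longleftrightarrow>
     \<Union>C = {1..n} \<and> {} \<notin> C \<and> (\<forall>c\<in>C. \<forall>d\<in>C. c \<noteq> d \<longrightarrow> c \<inter> d = {})"

definition intra :: "nat set set \<Rightarrow> nat \<Rightarrow> nat \<Rightarrow> bool" where
  "intra C x y \<longleftrightarrow> (\<exists>c\<in>C. x \<in> c \<and> y \<in> c)"

definition agrees :: "nat set set \<Rightarrow> nat set set \<Rightarrow> nat \<Rightarrow> nat \<Rightarrow> bool" where
  "agrees A B x y \<longleftrightarrow> (intra A x y \<longleftrightarrow> intra B x y)"

definition consistent_improvement ::
  "nat \<Rightarrow> nat set set \<Rightarrow> nat set set \<Rightarrow> nat set set \<Rightarrow> bool" where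
  "consistent_improvement n A B B' \<longleftrightarrow>
     B \<noteq> B' \<and>
     (\<forall>x\<in>{1..n}. \<forall>y\<in>{1..n}. x \<noteq> y \<longrightarrow> agrees A B x y \<longrightarrow> agrees A B' x y)"

definition perfect_split :: "nat set set \<Rightarrow> nat set set \<Rightarrow> nat set set \<Rightarrow> bool" where
  "perfect_split A B B' \<longleftrightarrow>
     (\<exists>B1 B1' B2'. B1 \<in> B \<and> B1' \<noteq> {} \<and> B2' \<noteq> {} \<and> B1' \<inter> B2' = {} \<and>
        B1' \<union> B2' = B1 \<and> B' = (B - {B1}) \<union> {B1', B2'} \<and>
        (\<forall>Ai\<in>A. Ai \<inter> B1 \<subseteq> B1' \<or> Ai \<inter> B1 \<subseteq> B2'))"

definition perfect_merge :: "nat set set \<Rightarrow> nat set set \<Rightarrow> nat set set \<Rightarrow> bool" where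
  "perfect_merge A B B' \<longleftrightarrow>
     (\<exists>Ai\<in>A. \<exists>B1\<in>B. \<exists>B2\<in>B. B1 \<noteq> B2 \<and> B1 \<subseteq> Ai \<and> B2 \<subseteq> Ai \<and>
        B' = (B - {B1, B2}) \<union> {B1 \<union> B2})"

definition perfect_step :: "nat set set \<Rightarrow> nat set set \<Rightarrow> nat set set \<Rightarrow> bool" where
  "perfect_step A B B' \<longleftrightarrow> perfect_split A B B' \<or> perfect_merge A B B'"

end

theory Submission
  imports Defs
begin

text \<open>
  Soundness: a perfect split only separates pairs that A separates, and a perfect merge only joins
  pairs that A joins, so every step (hence every sequence of steps) keeps each pair that agrees
  with A in agreement.

  Completeness: suppose every pair agreeing in A and B also agrees in A and B'. If some pair x, y
  is joined by B but separated by B', split the B-cluster of x, y along the B'-cluster of x;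
  otherwise B refines B', and we merge the B-clusters of a pair joined only by B'. Consistency
  makes either step perfect, and the new clustering agrees on every pair with B or with B' while
  differing from B, so it disagrees with B' on strictly fewer pairs. Induct on that number.
\<close>

lemma clustering_covers: "is_clustering n C \<Longrightarrow> x \<in> {1..n} \<Longrightarrow> \<exists>c\<in>C. x \<in> c"
  unfolding is_clustering_def by blast

lemma clustering_disjoint: "is_clustering n C \<Longrightarrow> c \<in> C \<Longrightarrow> d \<in> C \<Longrightarrow> c \<noteq> d \<Longrightarrow> c \<inter> d = {}"
  unfolding is_clustering_def by blast

lemma clustering_cluster_eq:
  assumes "is_clustering n C" "c \<in> C" "x \<in> c"
  shows "c = {y. intra C x y}"
  using assms unfolding is_clustering_def intra_def by blast

lemma clustering_cluster_subset: "is_clustering n C \<Longrightarrow> c \<in> C \<Longrightarrow> c \<subseteq> {1..n}"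
  unfolding is_clustering_def by blast

lemma intra_bounded: "is_clustering n C \<Longrightarrow> intra C x y \<Longrightarrow> y \<in> {1..n}"
  unfolding intra_def using clustering_cluster_subset by blast

lemma intra_sym: "intra C x y \<Longrightarrow> intra C y x"
  unfolding intra_def by blast

lemma intra_trans: "is_clustering n C \<Longrightarrow> intra C x y \<Longrightarrow> intra C y z \<Longrightarrow> intra C x z"
  by (metis clustering_cluster_eq intra_def mem_Collect_eq)

lemma clustering_subset_if_same_intra:
  assumes X: "is_clustering n X" and Y: "is_clustering n Y"
    and same: "\<And>u v. u \<in> {1..n} \<Longrightarrow> v \<in> {1..n} \<Longrightarrow> intra X u v = intra Y u v"
  shows "X \<subseteq> Y"
proof
  fix c assume c: "c \<in> X"
  moreover have "c \<noteq> {}" "c \<subseteq> \<Union>X" "\<Union>X = {1..n}"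
    using X c unfolding is_clustering_def by auto
  ultimately obtain x where x: "x \<in> c" and "x \<in> {1..n}" by blast
  then obtain c' where c': "c' \<in> Y" "x \<in> c'" using clustering_covers[OF Y] by blast
  have "intra X x y = intra Y x y" for y
    using same[OF \<open>x \<in> {1..n}\<close>, of y] intra_bounded[OF X, of x y] intra_bounded[OF Y, of x y]
    by blast
  then have "c = c'"
    using clustering_cluster_eq[OF X c x] clustering_cluster_eq[OF Y c'] by simp
  with c' show "c \<in> Y" by simp
qed

lemma clustering_eqI:
  assumes "is_clustering n X" "is_clustering n Y"
    and "\<And>u v. u \<in> {1..n} \<Longrightarrow> v \<in> {1..n} \<Longrightarrow> intra X u v = intra Y u v"
  shows "X = Y"
proof (rule subset_antisym)
  show "X \<subseteq> Y" using clustering_subset_if_same_intra[OF assms] .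
  show "Y \<subseteq> X" using clustering_subset_if_same_intra[OF assms(2,1)] assms(3) by metis
qed

lemma is_clustering_pairwise_disjnt:
  "is_clustering n C \<longleftrightarrow> \<Union>C = {1..n} \<and> {} \<notin> C \<and> pairwise disjnt C"
  unfolding is_clustering_def pairwise_def disjnt_def by blast

lemma is_clustering_split:
  assumes B: "is_clustering n B" and b: "b \<in> B" and "P \<noteq> {}" "Q \<noteq> {}" "P \<inter> Q = {}"
    and PQ: "P \<union> Q = b"
  shows "is_clustering n ((B - {b}) \<union> {P, Q})"
proof -
  have "\<Union>((B - {b}) \<union> {P, Q}) = \<Union>B" using b PQ by auto
  moreover have "pairwise disjnt (B - {b})"
    using B pairwise_subset[OF _ Diff_subset] unfolding is_clustering_pairwise_disjnt by blast
  moreover have "disjnt c P \<and> disjnt c Q" if "c \<in> B - {b}" for c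
    using that clustering_disjoint[OF B _ b] PQ unfolding disjnt_def by blast
  ultimately show ?thesis using assms unfolding is_clustering_pairwise_disjnt
    by (auto simp: pairwise_insert disjnt_sym disjnt_def)
qed

lemma is_clustering_merge:
  assumes B: "is_clustering n B" and b: "b1 \<in> B" "b2 \<in> B"
  shows "is_clustering n ((B - {b1, b2}) \<union> {b1 \<union> b2})"
proof -
  have "\<Union>((B - {b1, b2}) \<union> {b1 \<union> b2}) = \<Union>B" using b by auto
  moreover have "pairwise disjnt (B - {b1, b2})"
    using B pairwise_subset[OF _ Diff_subset] unfolding is_clustering_pairwise_disjnt by blast
  moreover have "disjnt c (b1 \<union> b2)" if "c \<in> B - {b1, b2}" for c
    using that clustering_disjoint[OF B] b unfolding disjnt_def by blast
  ultimately show ?thesis using assms unfolding is_clustering_pairwise_disjnt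
    by (auto simp: pairwise_insert disjnt_sym)
qed

lemma intra_split_imp:
  assumes "intra ((B - {b}) \<union> {P, Q}) u v" "b \<in> B" "P \<union> Q = b"
  shows "intra B u v"
proof -
  obtain c where "c \<in> (B - {b}) \<union> {P, Q}" "u \<in> c" "v \<in> c"
    using assms(1) unfolding intra_def by blast
  moreover have "c \<in> B \<or> c \<subseteq> b" if "c \<in> (B - {b}) \<union> {P, Q}" for c
    using that assms(3) by blast
  ultimately show ?thesis using assms(2) unfolding intra_def by blast
qed

lemma intra_splitI:
  assumes "intra B u v" "P \<union> Q = b"
    and "\<not> (u \<in> P \<and> v \<in> Q)" "\<not> (u \<in> Q \<and> v \<in> P)"
  shows "intra ((B - {b}) \<union> {P, Q}) u v"
proof -
  obtain c where c: "c \<in> B" "u \<in> c" "v \<in> c" using assms(1) unfolding intra_def by blast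
  show ?thesis
  proof (cases "c = b")
    case True
    then have "(u \<in> P \<and> v \<in> P) \<or> (u \<in> Q \<and> v \<in> Q)" using c assms(2-4) by blast
    then show ?thesis unfolding intra_def by blast
  next
    case False
    with c show ?thesis unfolding intra_def by blast
  qed
qed

lemma intra_merge_iff:
  "intra ((B - {b1, b2}) \<union> {b1 \<union> b2}) u v \<longleftrightarrow>
     intra B u v \<or> (u \<in> b1 \<union> b2 \<and> v \<in> b1 \<union> b2)"
  unfolding intra_def by auto

definition preserves_agreement ::
  "nat \<Rightarrow> nat set set \<Rightarrow> nat set set \<Rightarrow> nat set set \<Rightarrow> bool" where
  "preserves_agreement n A X Y \<longleftrightarrow>
     (\<forall>x\<in>{1..n}. \<forall>y\<in>{1..n}. x \<noteq> y \<longrightarrow> agrees A X x y \<longrightarrow> agrees A Y x y)"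

lemma consistent_improvement_iff:
  "consistent_improvement n A B B' \<longleftrightarrow> B' \<noteq> B \<and> preserves_agreement n A B B'"
  unfolding consistent_improvement_def preserves_agreement_def by blast

lemma preserves_agreement_trans:
  "preserves_agreement n A X Y \<Longrightarrow> preserves_agreement n A Y Z \<Longrightarrow> preserves_agreement n A X Z"
  unfolding preserves_agreement_def by blast

lemma perfect_split_preserves_agreement:
  assumes "perfect_split A X Y"
  shows "preserves_agreement n A X Y"
proof -
  obtain b P Q where b: "b \<in> X" and PQ: "P \<inter> Q = {}" "P \<union> Q = b"
    and Y: "Y = (X - {b}) \<union> {P, Q}" and perfect: "\<forall>Ai\<in>A. Ai \<inter> b \<subseteq> P \<or> Ai \<inter> b \<subseteq> Q"
    using assms unfolding perfect_split_def by blast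
  have "intra Y u v" if "intra X u v" "intra A u v" for u v
  proof -
    obtain Ai where "Ai \<in> A" "u \<in> Ai" "v \<in> Ai" using \<open>intra A u v\<close> unfolding intra_def by blast
    then have "\<not> (u \<in> P \<and> v \<in> Q)" "\<not> (u \<in> Q \<and> v \<in> P)"
      using perfect PQ by blast+
    then show ?thesis using intra_splitI[OF that(1) PQ(2)] Y by simp
  qed
  moreover have "intra X u v" if "intra Y u v" for u v
    using intra_split_imp that b PQ(2) Y by blast
  ultimately show ?thesis unfolding preserves_agreement_def agrees_def by blast
qed

lemma perfect_merge_preserves_agreement:
  assumes "perfect_merge A X Y"
  shows "preserves_agreement n A X Y"
proof -
  obtain Ai b1 b2 where Ai: "Ai \<in> A" "b1 \<subseteq> Ai" "b2 \<subseteq> Ai"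
    and Y: "Y = (X - {b1, b2}) \<union> {b1 \<union> b2}"
    using assms unfolding perfect_merge_def by blast
  have "intra A u v" if "u \<in> b1 \<union> b2" "v \<in> b1 \<union> b2" for u v
    using that Ai unfolding intra_def by blast
  then show ?thesis
    unfolding preserves_agreement_def agrees_def Y intra_merge_iff by blast
qed

lemma perfect_steps_preserve_agreement:
  "(perfect_step A)\<^sup>*\<^sup>* X Y \<Longrightarrow> preserves_agreement n A X Y"
proof (induction rule: rtranclp_induct)
  case base
  then show ?case unfolding preserves_agreement_def by blast
next
  case (step Y Z)
  then show ?case
    using preserves_agreement_trans perfect_split_preserves_agreement
      perfect_merge_preserves_agreement
    unfolding perfect_step_def by blast
qed

definition disagreements :: "nat \<Rightarrow> nat set set \<Rightarrow> nat set set \<Rightarrow> (nat \<times> nat) set" where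
  "disagreements n X Y = {(u, v) \<in> {1..n} \<times> {1..n}. intra X u v \<noteq> intra Y u v}"

definition between :: "nat \<Rightarrow> nat set set \<Rightarrow> nat set set \<Rightarrow> nat set set \<Rightarrow> bool" where
  "between n B C B' \<longleftrightarrow>
     (\<forall>u\<in>{1..n}. \<forall>v\<in>{1..n}. intra C u v = intra B u v \<or> intra C u v = intra B' u v)"

lemma between_preserves_agreement:
  "preserves_agreement n A B B' \<Longrightarrow> between n B C B' \<Longrightarrow> preserves_agreement n A C B'"
  unfolding preserves_agreement_def between_def agrees_def by metis

lemma card_disagreements_between_less:
  assumes B: "is_clustering n B" and C: "is_clustering n C"
    and "between n B C B'" and "C \<noteq> B"
  shows "card (disagreements n C B') < card (disagreements n B B')"
proof (rule psubset_card_mono)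
  show "finite (disagreements n B B')"
    by (rule finite_subset[of _ "{1..n} \<times> {1..n}"]) (auto simp: disagreements_def)
  obtain u v where uv: "u \<in> {1..n}" "v \<in> {1..n}" "intra C u v \<noteq> intra B u v"
    using clustering_eqI[OF C B] \<open>C \<noteq> B\<close> by blast
  moreover have "intra C u v = intra B' u v"
    using \<open>between n B C B'\<close> uv unfolding between_def by blast
  ultimately have "(u, v) \<in> disagreements n B B' - disagreements n C B'"
    unfolding disagreements_def by auto
  moreover have "disagreements n C B' \<subseteq> disagreements n B B'"
    using \<open>between n B C B'\<close> unfolding between_def disagreements_def by blast
  ultimately show "disagreements n C B' \<subset> disagreements n B B'" by blast
qed

lemma perfect_split_towards:
  assumes B: "is_clustering n B" and B': "is_clustering n B'"
    and cons: "preserves_agreement n A B B'"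
    and x: "x \<in> {1..n}" and xy: "intra B x y" "\<not> intra B' x y"
  shows "\<exists>C. perfect_split A B C \<and> is_clustering n C \<and> C \<noteq> B \<and> between n B C B'"
proof -
  obtain b where b: "b \<in> B" "x \<in> b" "y \<in> b" using xy(1) unfolding intra_def by blast
  obtain b' where b': "b' \<in> B'" "x \<in> b'" using clustering_covers[OF B' x] by blast
  have cut: "\<not> intra B' u v" if "u \<in> b'" "v \<notin> b'" for u v
    using clustering_cluster_eq[OF B' b'(1) that(1)] that(2) by blast
  have "y \<notin> b'" using b' xy(2) unfolding intra_def by blast
  define P where "P = b \<inter> b'"
  define Q where "Q = b - b'"
  define C where "C = (B - {b}) \<union> {P, Q}"
  have PQ: "P \<noteq> {}" "Q \<noteq> {}" "P \<inter> Q = {}" "P \<union> Q = b"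
    using b b' \<open>y \<notin> b'\<close> unfolding P_def Q_def by auto
  have "\<not> intra A u v" if u: "u \<in> P" and v: "v \<in> Q" for u v
  proof
    assume "intra A u v"
    moreover have "u \<in> {1..n}" "v \<in> {1..n}"
      using u v clustering_cluster_subset[OF B b(1)] unfolding P_def Q_def by auto
    moreover have "u \<noteq> v" "intra B u v"
      using u v b(1) unfolding P_def Q_def intra_def by auto
    ultimately have "intra B' u v"
      using cons unfolding preserves_agreement_def agrees_def by blast
    with cut u v show False unfolding P_def Q_def by blast
  qed
  then have "\<forall>Ai\<in>A. Ai \<inter> b \<subseteq> P \<or> Ai \<inter> b \<subseteq> Q"
    using PQ(4) unfolding intra_def by blast
  then have "perfect_split A B C"
    unfolding perfect_split_def C_def using b(1) PQ by blast
  moreover have "is_clustering n C"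
    unfolding C_def using is_clustering_split[OF B b(1) PQ] .
  moreover have "b \<notin> C"
  proof -
    have "P \<noteq> b" "Q \<noteq> b" using PQ by blast+
    then show ?thesis unfolding C_def by blast
  qed
  then have "C \<noteq> B" using b(1) by blast
  moreover have "between n B C B'"
    unfolding between_def
  proof (intro ballI)
    fix u v
    have "intra C u v \<Longrightarrow> intra B u v"
      using intra_split_imp b(1) PQ(4) unfolding C_def by blast
    moreover have "\<not> intra B' u v" if "intra B u v" "\<not> intra C u v"
    proof -
      have "(u \<in> P \<and> v \<in> Q) \<or> (u \<in> Q \<and> v \<in> P)"
        using intra_splitI[OF that(1) PQ(4)] that(2) unfolding C_def by blast
      then show ?thesis using cut intra_sym unfolding P_def Q_def by blast
    qed
    ultimately show "intra C u v = intra B u v \<or> intra C u v = intra B' u v" by blast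
  qed
  ultimately show ?thesis by blast
qed

lemma perfect_merge_towards:
  assumes A: "is_clustering n A" and B: "is_clustering n B" and B': "is_clustering n B'"
    and cons: "preserves_agreement n A B B'"
    and refines: "\<And>u v. intra B u v \<Longrightarrow> intra B' u v"
    and xy: "x \<in> {1..n}" "y \<in> {1..n}" "\<not> intra B x y" "intra B' x y"
  shows "\<exists>C. perfect_merge A B C \<and> is_clustering n C \<and> C \<noteq> B \<and> between n B C B'"
proof -
  obtain b1 b2 where b1: "b1 \<in> B" "x \<in> b1" and b2: "b2 \<in> B" "y \<in> b2"
    using clustering_covers[OF B] xy(1,2) by metis
  have "b1 \<noteq> b2" using b1 b2 xy(3) unfolding intra_def by blast
  then have disj: "b1 \<inter> b2 = {}" using clustering_disjoint[OF B b1(1) b2(1)] by blast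
  have "intra B' x u" if "u \<in> b1 \<union> b2" for u
  proof (cases "u \<in> b1")
    case True
    then show ?thesis using b1 refines unfolding intra_def by blast
  next
    case False
    then have "intra B' y u" using that b2 refines unfolding intra_def by blast
    then show ?thesis using intra_trans[OF B' xy(4)] by blast
  qed
  then have joinedB': "intra B' u v" if "u \<in> b1 \<union> b2" "v \<in> b1 \<union> b2" for u v
    using that intra_sym intra_trans[OF B'] by blast
  \<comment> \<open>Pairs across b1, b2 are separated by B and joined by B', so by consistency A joins them.\<close>
  have joinedA: "intra A u v" if u: "u \<in> b1" and v: "v \<in> b2" for u v
  proof (rule ccontr)
    assume "\<not> intra A u v"
    moreover have "\<not> intra B u v"
      using clustering_cluster_eq[OF B b1(1) u] v disj by blast
    moreover have "u \<in> {1..n}" "v \<in> {1..n}" "u \<noteq> v"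
      using u v disj clustering_cluster_subset[OF B] b1(1) b2(1) by blast+
    ultimately have "\<not> intra B' u v"
      using cons unfolding preserves_agreement_def agrees_def by blast
    with joinedB' u v show False by blast
  qed
  obtain Ai where Ai: "Ai \<in> A" "x \<in> Ai" using clustering_covers[OF A xy(1)] by blast
  have "intra A x v" if "v \<in> b1 \<union> b2" for v
  proof (cases "v \<in> b2")
    case False
    then have "intra A v y" using that joinedA b2(2) by blast
    then show ?thesis using intra_trans[OF A joinedA[OF b1(2) b2(2)]] intra_sym by blast
  qed (use joinedA b1(2) in blast)
  then have "b1 \<union> b2 \<subseteq> Ai" using clustering_cluster_eq[OF A Ai] by blast
  define C where "C = (B - {b1, b2}) \<union> {b1 \<union> b2}"
  have "perfect_merge A B C"
    unfolding perfect_merge_def C_def using Ai(1) b1(1) b2(1) \<open>b1 \<noteq> b2\<close> \<open>b1 \<union> b2 \<subseteq> Ai\<close> by blast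
  moreover have "is_clustering n C"
    unfolding C_def using is_clustering_merge[OF B b1(1) b2(1)] .
  moreover have "b1 \<notin> C"
    using b1(2) b2(2) disj unfolding C_def by blast
  then have "C \<noteq> B" using b1(1) by blast
  moreover have "between n B C B'"
    unfolding between_def C_def intra_merge_iff using joinedB' refines by blast
  ultimately show ?thesis by blast
qed

lemma perfect_step_towards:
  assumes A: "is_clustering n A" and B: "is_clustering n B" and B': "is_clustering n B'"
    and cons: "preserves_agreement n A B B'" and "B \<noteq> B'"
  shows "\<exists>C. perfect_step A B C \<and> is_clustering n C \<and> C \<noteq> B \<and> between n B C B'"
proof (cases "\<exists>x\<in>{1..n}. \<exists>y. intra B x y \<and> \<not> intra B' x y")
  case True
  then show ?thesis
    using perfect_split_towards[OF B B' cons] unfolding perfect_step_def by blast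
next
  case False
  then have refines: "intra B u v \<Longrightarrow> intra B' u v" for u v
    using intra_sym intra_bounded[OF B] by blast
  obtain x y where "x \<in> {1..n}" "y \<in> {1..n}" "intra B x y \<noteq> intra B' x y"
    using clustering_eqI[OF B B'] \<open>B \<noteq> B'\<close> by blast
  with refines have "\<not> intra B x y" "intra B' x y" by blast+
  then show ?thesis
    using perfect_merge_towards[OF A B B' cons refines] \<open>x \<in> {1..n}\<close> \<open>y \<in> {1..n}\<close>
    unfolding perfect_step_def by blast
qed

lemma perfect_steps_if_preserves_agreement:
  assumes A: "is_clustering n A" and B: "is_clustering n B" and B': "is_clustering n B'"
    and cons: "preserves_agreement n A B B'"
  shows "(perfect_step A)\<^sup>*\<^sup>* B B'"
  using B cons
proof (induction "card (disagreements n B B')" arbitrary: B rule: less_induct)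
  case less
  show ?case
  proof (cases "B = B'")
    case False
    then obtain C where C: "perfect_step A B C" "is_clustering n C" "C \<noteq> B" "between n B C B'"
      using perfect_step_towards[OF A less.prems(1) B' less.prems(2)] by blast
    have "(perfect_step A)\<^sup>*\<^sup>* C B'"
      using less.hyps card_disagreements_between_less[OF less.prems(1) C(2,4,3)] C(2)
        between_preserves_agreement[OF less.prems(2) C(4)] by blast
    with C(1) show ?thesis by (rule converse_rtranclp_into_rtranclp)
  qed simp
qed

theorem theorem2:
  fixes n :: nat and A B B' :: "nat set set"
  assumes "is_clustering n A" and "is_clustering n B" and "is_clustering n B'"
  shows "consistent_improvement n A B B' \<longleftrightarrow>
           B' \<noteq> B \<and> (perfect_step A)\<^sup>*\<^sup>* B B'"
  unfolding consistent_improvement_iff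
  using perfect_steps_if_preserves_agreement[OF assms] perfect_steps_preserve_agreement by blast

end
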